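(* Let $\eta>0$ and $\theta>0$, and let $(\bar q(t))_{t\in\mathbb Z_+}$ be a sequence in $(0,1)$ such that $$\bar q(t+1)-\bar q(t)\le-\frac{\eta\,\bar q(t)^2}{1-\log(\theta\bar q(t))}\quad\text{for all }t,$$ and $\theta\bar q(0)\le1$. Then for every $T$ with $\eta T/\theta\ge e$, $$\bar q(T)\le\frac{1}{\eta T}\log\Big(\frac{\eta T}{\theta}\Big).$$ *)

theory Defs
  imports Complex_Main
begin

end

theory Submission
  imports Defs
begin

text \<open>
  In the normalised variable \<open>p = \<theta> q\<close> the recurrence reads
  \<open>p(t+1) \<le> p(t) - c p(t)\<^sup>2 / (1 - ln p(t))\<close> with \<open>c = \<eta>/\<theta>\<close>, and \<open>p\<close> stays in \<open>(0,1]\<close>.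
  For \<open>u = 1/p \<ge> 1\<close> this gives \<open>u(t+1) \<ge> u(t) + c / (1 + ln u(t))\<close>. Since
  \<open>1 + ln u\<close> is the derivative of the convex function \<open>u ln u\<close>, the potential
  \<open>u ln u\<close> grows by at least \<open>c\<close> per step, so \<open>u(T) ln u(T) \<ge> cT\<close>. As \<open>u ln u\<close> is
  increasing on \<open>[1,\<infinity>)\<close> and \<open>x/ln x\<close> has potential at most \<open>x\<close>, this forces
  \<open>u(T) \<ge> cT / ln (cT)\<close>.
\<close>

lemma xlnx_tangent_le:
  fixes a b :: real
  assumes "0 < a" "0 < b"
  shows "(b - a) * (1 + ln a) \<le> b * ln b - a * ln a"
proof -
  have "ln a - ln b \<le> a / b - 1"
    using ln_le_minus_one[of "a / b"] assms by (simp add: ln_div)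
  then have "b * (ln a - ln b) \<le> a - b"
    using mult_left_mono[of _ _ b] assms by (fastforce simp: field_simps)
  then show ?thesis by (simp add: algebra_simps)
qed

lemma xlnx_less_xlnx:
  fixes a b :: real
  assumes "1 \<le> a" "a < b"
  shows "a * ln a < b * ln b"
proof -
  have "0 \<le> ln a" using assms by simp
  then have "0 < 1 + ln a" by linarith
  then have "0 < (b - a) * (1 + ln a)" using assms(2) by simp
  also have "\<dots> \<le> b * ln b - a * ln a" using assms by (intro xlnx_tangent_le) auto
  finally show ?thesis by simp
qed

lemma x_div_ln_times_ln_le:
  fixes x :: real
  assumes "0 < x" "1 \<le> ln x"
  shows "x / ln x * ln (x / ln x) \<le> x"
proof -
  have "1 < x" using ln_le_minus_one[OF assms(1)] assms(2) by linarith
  have "0 \<le> ln (ln x)" using assms by simp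
  then have "0 \<le> x * ln (ln x)" using mult_nonneg_nonneg assms(1) by fastforce
  then have "0 \<le> x * ln (ln x) / ln x" using assms(2) by simp
  moreover have "x / ln x * ln (x / ln x) = x - x * ln (ln x) / ln x"
    using assms \<open>1 < x\<close> by (simp add: ln_div field_simps)
  ultimately show ?thesis by linarith
qed

lemma div_ln_le_of_xlnx_ge:
  fixes u x :: real
  assumes "1 \<le> u" "exp 1 \<le> x" "x \<le> u * ln u"
  shows "x / ln x \<le> u"
proof (rule ccontr)
  assume "\<not> x / ln x \<le> u"
  have "0 < x" using assms(2) exp_gt_zero[of 1] by linarith
  then have "1 \<le> ln x" using assms(2) by (subst ln_ge_iff) auto
  have "u * ln u < x / ln x * ln (x / ln x)"
    using assms(1) \<open>\<not> x / ln x \<le> u\<close> by (intro xlnx_less_xlnx) auto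
  also have "\<dots> \<le> x" using \<open>0 < x\<close> \<open>1 \<le> ln x\<close> by (rule x_div_ln_times_ln_le)
  finally show False using assms(3) by simp
qed

lemma reciprocal_increment_ge:
  fixes p p' c D :: real
  assumes "0 < p'" "0 < p" "0 \<le> c" "0 < D"
    and "p' \<le> p - c * p\<^sup>2 / D"
  shows "1 / p + c / D \<le> 1 / p'"
proof -
  have "0 \<le> c * p\<^sup>2 / D" using assms by simp
  then have "p' \<le> p" using assms(5) by linarith
  have "c / D = (c * p\<^sup>2 / D) / (p * p)"
    using assms(2) by (simp add: power2_eq_square)
  also have "\<dots> \<le> (p - p') / (p * p)"
    using assms(2,5) by (intro divide_right_mono) auto
  also have "\<dots> \<le> (p - p') / (p * p')"
    using assms(1,2) \<open>p' \<le> p\<close> by (intro divide_left_mono mult_left_mono mult_pos_pos) auto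
  also have "\<dots> = 1 / p' - 1 / p"
    using assms(1,2) by (simp add: field_simps)
  finally show ?thesis by simp
qed

lemma xlnx_potential_ge:
  fixes u :: "nat \<Rightarrow> real" and c :: real
  assumes "\<And>t. 1 \<le> u t"
    and "\<And>t. u t + c / (1 + ln (u t)) \<le> u (Suc t)"
  shows "u 0 * ln (u 0) + c * real t \<le> u t * ln (u t)"
proof (induction t)
  case 0
  then show ?case by simp
next
  case (Suc t)
  have "1 \<le> 1 + ln (u t)" using assms(1)[of t] by simp
  then have "c = c / (1 + ln (u t)) * (1 + ln (u t))" by simp
  also have "\<dots> \<le> (u (Suc t) - u t) * (1 + ln (u t))"
    using assms(2)[of t] \<open>1 \<le> 1 + ln (u t)\<close> by (intro mult_right_mono) auto
  also have "\<dots> \<le> u (Suc t) * ln (u (Suc t)) - u t * ln (u t)"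
    using assms(1) by (intro xlnx_tangent_le) (auto intro: less_le_trans[of 0 1])
  finally show ?case using Suc.IH by (simp add: algebra_simps)
qed

lemma normalized_recurrence_bound:
  fixes c :: real and p :: "nat \<Rightarrow> real" and T :: nat
  assumes "0 < c" "\<And>t. 0 < p t" "p 0 \<le> 1"
    and "\<And>t. p (Suc t) \<le> p t - c * (p t)\<^sup>2 / (1 - ln (p t))"
    and "exp 1 \<le> c * real T"
  shows "p T \<le> ln (c * real T) / (c * real T)"
proof -
  have p_le_1: "p t \<le> 1" for t
  proof (induction t)
    case (Suc t)
    have "ln (p t) \<le> 0" using Suc assms(2) by simp
    then have "0 \<le> c * (p t)\<^sup>2 / (1 - ln (p t))"
      using assms(1) by simp
    then show ?case using assms(4)[of t] Suc by linarith
  qed (use assms(3) in simp)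
  define u where "u t = 1 / p t" for t
  have u_ge_1: "1 \<le> u t" for t
    using p_le_1 assms(2) by (simp add: u_def)
  have u_step: "u t + c / (1 + ln (u t)) \<le> u (Suc t)" for t
  proof -
    have "ln (p t) \<le> 0" using p_le_1[of t] assms(2)[of t] by simp
    then have "0 < 1 - ln (p t)" by linarith
    then have "1 / p t + c / (1 - ln (p t)) \<le> 1 / p (Suc t)"
      using assms(1,2,4) by (intro reciprocal_increment_ge) auto
    moreover have "1 + ln (u t) = 1 - ln (p t)" using assms(2) by (simp add: u_def ln_div)
    ultimately show ?thesis by (simp add: u_def)
  qed
  have "0 \<le> u 0 * ln (u 0)" using u_ge_1[of 0] by simp
  moreover have "u 0 * ln (u 0) + c * real T \<le> u T * ln (u T)"
    using u_ge_1 u_step by (rule xlnx_potential_ge)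
  ultimately have "c * real T \<le> u T * ln (u T)" by linarith
  then have u_T_ge: "c * real T / ln (c * real T) \<le> u T"
    using u_ge_1 assms(5) by (intro div_ln_le_of_xlnx_ge) auto
  have "1 < c * real T" by (rule less_le_trans[OF _ assms(5)]) simp
  then have "0 < c * real T / ln (c * real T)" by simp
  then have "1 / u T \<le> 1 / (c * real T / ln (c * real T))"
    using u_T_ge u_ge_1[of T] by (intro divide_left_mono mult_pos_pos) auto
  then show ?thesis by (simp add: u_def)
qed

theorem lemma10:
  fixes \<eta> \<theta> :: real and q :: "nat \<Rightarrow> real" and T :: nat
  assumes "\<eta> > 0" and "\<theta> > 0"
    and "\<And>t. 0 < q t \<and> q t < 1"
    and "\<And>t. q (Suc t) - q t \<le> - (\<eta> * (q t)\<^sup>2 / (1 - ln (\<theta> * q t)))"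
    and "\<theta> * q 0 \<le> 1"
    and "\<eta> * real T / \<theta> \<ge> exp 1"
  shows "q T \<le> 1 / (\<eta> * real T) * ln (\<eta> * real T / \<theta>)"
proof -
  define c where "c = \<eta> / \<theta>"
  have scaled: "\<theta> * q (Suc t) \<le> \<theta> * q t - c * (\<theta> * q t)\<^sup>2 / (1 - ln (\<theta> * q t))" for t
  proof -
    have "\<theta> * q (Suc t) \<le> \<theta> * (q t - \<eta> * (q t)\<^sup>2 / (1 - ln (\<theta> * q t)))"
      using assms(2) assms(4)[of t] by (intro mult_left_mono) auto
    then show ?thesis
      using assms(2) by (simp add: c_def power2_eq_square field_simps)
  qed
  have "\<theta> * q T \<le> ln (c * real T) / (c * real T)"
    using normalized_recurrence_bound[of c "\<lambda>t. \<theta> * q t" T] scaled assms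
    by (simp add: c_def)
  also have "\<dots> = \<theta> * (1 / (\<eta> * real T) * ln (\<eta> * real T / \<theta>))"
    using assms(2) by (simp add: c_def)
  finally show ?thesis by (rule mult_le_cancel_left_pos[OF assms(2), THEN iffD1])
qed

end
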